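(* Let $n\ge 2$, $m\ge 1$, and let $T_{ij}\in\mathbb R^{m\times m}$ ($i,j\in\{1,\dots,n\}$) be similarity matrices with $T_{ij}=T_{ji}^\top$. Suppose that for every pair $i,j$ the maximization $\max_{P\in\mathcal P_m}\operatorname{tr}(P^\top T_{ij})$ has a unique maximizer $P_{ij}\in\mathcal P_m$, and that these maximizers are consistent: $P_{ij}P_{jk}=P_{ik}$ for all $i,j,k\in\{1,\dots,n\}$. Then Algorithm 1 (run with any Maximum Spanning Tree, any processing order of its edges, any initial permutation matrices, and any sequence of coordinate updates) outputs permutation matrices $A_1,\dots,A_n$ that attain the maximum in $$\max_{A_1,\dots,A_n\in\mathcal P_m}\ \mathcal L(A_1,\dots,A_n):=\sum_{i=1}^n\sum_{j=1}^n\operatorname{tr}(A_iT_{ij}A_j^\top).$$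
   Context: $\mathcal P_m$ denotes the set of $m\times m$ permutation matrices. Define $f(T_{ij}):=\max_{P\in\mathcal P_m}\operatorname{tr}(P^\top T_{ij})$. Algorithm 1 (input: $T_{ij}$ for $i,j\in\{1,\dots,n\}$): (1) Form the complete undirected graph $G$ on vertices $v_1,\dots,v_n$ where edge $(v_i,v_j)$, $i\ne j$, has weight $f(T_{ij})$, and compute a Maximum Spanning Tree with edge set $E'$. (2) Set $S_i\leftarrow\{v_i\}$ for each $i$ and initialize each $A_i$ to an arbitrary element of $\mathcal P_m$. (3) For each edge $(v_i,v_j)\in E'$ (in some order): compute $\hat P=\arg\max_{P\in\mathcal P_m}\operatorname{tr}(P^\top A_iT_{ij}A_j^\top)$; set $A_{j'}\leftarrow \hat P A_{j'}$ for every $v_{j'}\in S_j$; let $S'=S_i\cup S_j$ and set $S_k\leftarrow S'$ for every $v_k\in S'$. (4) Coordinate updates: repeatedly pick $i\in\{1,\dots,n\}$ and replace $A_i$ by a maximizer $\arg\max_{A\in\mathcal P_m}\operatorname{tr}\big(A^\top\sum_{j\ne i}A_jT_{ij}\big)$, until convergence. *)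

theory Defs
  imports "HOL-Analysis.Analysis"
begin

text \<open>Matrices are real m x m matrices indexed by a finite type 'm (so m >= 1).
  Vertices are the naturals 1..n.\<close>

type_synonym 'm mat = "real^'m^'m"

definition perm_mats :: "'m::finite mat set" where
  "perm_mats = {(\<chi> r c. if c = p r then 1 else 0) | p. p permutes (UNIV :: 'm set)}"

definition tr :: "'m::finite mat \<Rightarrow> real" where
  "tr A = trace A"

definition argmax_perm :: "('m::finite mat \<Rightarrow> real) \<Rightarrow> 'm mat set" where
  "argmax_perm F = {P \<in> perm_mats. \<forall>Q\<in>perm_mats. F Q \<le> F P}"

definition fval :: "'m::finite mat \<Rightarrow> real" where
  "fval T = Max ((\<lambda>P. tr (transpose P ** T)) ` perm_mats)"

definition Lobj :: "nat \<Rightarrow> (nat \<Rightarrow> nat \<Rightarrow> 'm::finite mat) \<Rightarrow> (nat \<Rightarrow> 'm mat) \<Rightarrow> real" where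
  "Lobj n T A = (\<Sum>i=1..n. \<Sum>j=1..n. tr (A i ** T i j ** transpose (A j)))"

definition complete_edges :: "nat \<Rightarrow> (nat \<times> nat) set" where
  "complete_edges n = {(i,j). 1 \<le> i \<and> i < j \<and> j \<le> n}"

definition sym_edges :: "(nat \<times> nat) set \<Rightarrow> (nat \<times> nat) set" where
  "sym_edges E = E \<union> E\<inverse>"

text \<open>Spanning tree of the complete graph: connected and acyclic (every edge is a bridge).\<close>
definition spanning_tree :: "nat \<Rightarrow> (nat \<times> nat) set \<Rightarrow> bool" where
  "spanning_tree n E \<longleftrightarrow> E \<subseteq> complete_edges n
     \<and> (\<forall>u\<in>{1..n}. \<forall>v\<in>{1..n}. (u,v) \<in> (sym_edges E)\<^sup>*)
     \<and> (\<forall>e\<in>E. e \<notin> (sym_edges (E - {e}))\<^sup>*)"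

definition max_spanning_tree :: "nat \<Rightarrow> (nat \<Rightarrow> nat \<Rightarrow> 'm::finite mat) \<Rightarrow> (nat \<times> nat) set \<Rightarrow> bool" where
  "max_spanning_tree n T E \<longleftrightarrow> spanning_tree n E \<and>
     (\<forall>E'. spanning_tree n E' \<longrightarrow>
        (\<Sum>(i,j)\<in>E'. fval (T i j)) \<le> (\<Sum>(i,j)\<in>E. fval (T i j)))"

definition norm_edge :: "nat \<times> nat \<Rightarrow> nat \<times> nat" where
  "norm_edge e = (if fst e < snd e then e else (snd e, fst e))"

text \<open>An ordering of the tree's edges, each edge (v_i,v_j) given with an arbitrary orientation.\<close>
definition edge_order :: "(nat \<times> nat) set \<Rightarrow> (nat \<times> nat) list \<Rightarrow> bool" where
  "edge_order E es \<longleftrightarrow> distinct (map norm_edge es) \<and> set (map norm_edge es) = E"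

text \<open>One step of stage (3) of Algorithm 1 on edge (i,j); state = (A, S).\<close>
definition merge_step ::
  "(nat \<Rightarrow> nat \<Rightarrow> 'm::finite mat) \<Rightarrow> nat \<times> nat \<Rightarrow>
   (nat \<Rightarrow> 'm mat) \<times> (nat \<Rightarrow> nat set) \<Rightarrow> (nat \<Rightarrow> 'm mat) \<times> (nat \<Rightarrow> nat set) \<Rightarrow> bool" where
  "merge_step T e st st' \<longleftrightarrow>
     (case e of (i,j) \<Rightarrow> case st of (A,S) \<Rightarrow>
       (\<exists>Ph \<in> argmax_perm (\<lambda>P. tr (transpose P ** (A i ** T i j ** transpose (A j)))).
          st' = ((\<lambda>k. if k \<in> S j then Ph ** A k else A k),
                 (\<lambda>k. if k \<in> S i \<union> S j then S i \<union> S j else S k))))"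

inductive merge_run ::
  "(nat \<Rightarrow> nat \<Rightarrow> 'm::finite mat) \<Rightarrow> (nat \<times> nat) list \<Rightarrow>
   (nat \<Rightarrow> 'm mat) \<times> (nat \<Rightarrow> nat set) \<Rightarrow> (nat \<Rightarrow> 'm mat) \<times> (nat \<Rightarrow> nat set) \<Rightarrow> bool"
  for T where
  nil: "merge_run T [] st st"
| cons: "merge_step T e st st' \<Longrightarrow> merge_run T es st' st'' \<Longrightarrow> merge_run T (e # es) st st''"

text \<open>One coordinate update of stage (4): A_i := argmax_A tr(A^T sum_{j<>i} A_j T_ji)
  (this is the block-coordinate maximiser of L in A_i).\<close>
definition coord_step :: "nat \<Rightarrow> (nat \<Rightarrow> nat \<Rightarrow> 'm::finite mat) \<Rightarrow>
    (nat \<Rightarrow> 'm mat) \<Rightarrow> (nat \<Rightarrow> 'm mat) \<Rightarrow> bool" where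
  "coord_step n T A A' \<longleftrightarrow>
     (\<exists>i\<in>{1..n}. \<exists>B \<in> argmax_perm (\<lambda>X. tr (transpose X ** (\<Sum>j\<in>{1..n} - {i}. A j ** T j i))).
        A' = A(i := B))"

end

theory Submission
  imports Defs
begin

text \<open>
  Call \<open>A\<^sub>1, \<dots>, A\<^sub>n\<close> synchronized if \<open>A\<^sub>k\<^sup>T A\<^sub>l = P\<^sub>k\<^sub>l\<close> for all \<open>k, l\<close>.
  Since \<open>tr (A\<^sub>i T\<^sub>i\<^sub>j A\<^sub>j\<^sup>T) = tr ((A\<^sub>i\<^sup>T A\<^sub>j)\<^sup>T T\<^sub>i\<^sub>j) \<le> tr (P\<^sub>i\<^sub>j\<^sup>T T\<^sub>i\<^sub>j)\<close>, a synchronized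
  tuple maximizes every summand of \<open>L\<close> separately, hence \<open>L\<close>.
  During the spanning-tree stage each current component is synchronized: merging along
  the edge \<open>(i, j)\<close> the unique maximizer is \<open>A\<^sub>i P\<^sub>i\<^sub>j A\<^sub>j\<^sup>T\<close>, and multiplying the component of
  \<open>j\<close> by it gives \<open>A\<^sub>k = A\<^sub>i P\<^sub>i\<^sub>k\<close> on the merged component by consistency. As the tree spans
  all vertices, the output of this stage is synchronized. Finally a synchronized tuple is a
  fixed point of every coordinate update: for \<open>n \<ge> 2\<close> the update objective is a sum of terms
  each maximal at \<open>A\<^sub>i\<close>, so by uniqueness any maximizer \<open>B\<close> satisfies \<open>A\<^sub>j\<^sup>T B = P\<^sub>j\<^sub>i\<close>, i.e.
  \<open>B = A\<^sub>i\<close>.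
\<close>

definition perm_matrix :: "('m::finite \<Rightarrow> 'm) \<Rightarrow> 'm mat" where
  "perm_matrix p = (\<chi> r c. if c = p r then 1 else 0)"

lemma perm_mats_eq: "perm_mats = {perm_matrix p | p. p permutes (UNIV :: 'm::finite set)}"
  unfolding perm_mats_def perm_matrix_def by simp

lemma perm_matrix_mult: "perm_matrix p ** perm_matrix q = perm_matrix (q \<circ> p)"
  unfolding perm_matrix_def matrix_matrix_mult_def
  by (simp add: vec_eq_iff if_distrib[of "\<lambda>x. x * _"] sum.delta cong: if_cong)

lemma transpose_perm_matrix: "p permutes UNIV \<Longrightarrow> transpose (perm_matrix p) = perm_matrix (inv p)"
  unfolding perm_matrix_def transpose_def
  by (auto simp: vec_eq_iff permutes_inverses)

lemma perm_matrix_id: "perm_matrix id = mat 1"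
  unfolding perm_matrix_def mat_def by (simp add: vec_eq_iff)

lemma perm_mats_mult: "P \<in> perm_mats \<Longrightarrow> Q \<in> perm_mats \<Longrightarrow> P ** Q \<in> perm_mats"
  unfolding perm_mats_eq using perm_matrix_mult permutes_compose by blast

lemma perm_mats_transpose: "P \<in> perm_mats \<Longrightarrow> transpose P \<in> perm_mats"
  unfolding perm_mats_eq using transpose_perm_matrix permutes_inv by blast

lemma perm_mats_transpose_mult: "P \<in> perm_mats \<Longrightarrow> transpose P ** P = mat 1"
  unfolding perm_mats_eq
  by (auto simp: transpose_perm_matrix perm_matrix_mult permutes_inv_o perm_matrix_id)

lemma perm_mats_mult_transpose: "P \<in> perm_mats \<Longrightarrow> P ** transpose P = mat 1"
  using perm_mats_transpose_mult[OF perm_mats_transpose] by simp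

lemma perm_mats_mult_transpose_cancel:
  "P \<in> perm_mats \<Longrightarrow> X ** transpose P ** P = X"
  "P \<in> perm_mats \<Longrightarrow> X ** P ** transpose P = X"
  by (simp_all add: matrix_mul_assoc[symmetric] perm_mats_transpose_mult perm_mats_mult_transpose)

lemma perm_mats_transpose_mult_eq_iff:
  assumes "Q \<in> perm_mats"
  shows "transpose Q ** X = Y \<longleftrightarrow> X = Q ** Y"
proof
  assume "transpose Q ** X = Y"
  then show "X = Q ** Y"
    using perm_mats_mult_transpose[OF assms] by (auto simp: matrix_mul_assoc)
next
  assume "X = Q ** Y"
  then show "transpose Q ** X = Y"
    using perm_mats_transpose_mult[OF assms] by (auto simp: matrix_mul_assoc)
qed

lemma tr_mult_sum: "tr (X ** sum f S) = (\<Sum>j\<in>S. tr (X ** f j))"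
proof (induction S rule: infinite_finite_induct)
  case (infinite S)
  then show ?case by (simp add: tr_def trace_def matrix_matrix_mult_def)
next
  case empty
  then show ?case by (simp add: tr_def trace_def matrix_matrix_mult_def)
next
  case (insert x F)
  then show ?case by (simp add: matrix_add_ldistrib tr_def trace_add)
qed

lemma tr_transpose_mult_conj:
  "tr (transpose Q ** (A ** T ** transpose B)) = tr (transpose (transpose A ** Q ** B) ** T)"
proof -
  have "tr (transpose Q ** (A ** T ** transpose B)) = tr ((transpose Q ** A ** T) ** transpose B)"
    by (simp add: matrix_mul_assoc)
  also have "\<dots> = tr (transpose B ** (transpose Q ** A ** T))"
    unfolding tr_def by (rule trace_mul_sym)
  also have "\<dots> = tr (transpose (transpose A ** Q ** B) ** T)"
    by (simp add: matrix_transpose_mul matrix_mul_assoc)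
  finally show ?thesis .
qed

lemma tr_conj: "tr (A ** T ** transpose B) = tr (transpose (transpose A ** B) ** T)"
  using tr_transpose_mult_conj[of "mat 1" A T B] by simp

lemma argmax_perm_singletonD:
  assumes "argmax_perm F = {P}"
  shows "P \<in> perm_mats" and "Q \<in> perm_mats \<Longrightarrow> F Q \<le> F P"
    and "Q \<in> perm_mats \<Longrightarrow> F P \<le> F Q \<Longrightarrow> Q = P"
proof -
  have P: "P \<in> perm_mats" "\<And>Q. Q \<in> perm_mats \<Longrightarrow> F Q \<le> F P"
    using assms unfolding argmax_perm_def by blast+
  then show "P \<in> perm_mats" and "Q \<in> perm_mats \<Longrightarrow> F Q \<le> F P" by blast+
  assume "Q \<in> perm_mats" "F P \<le> F Q"
  then have "Q \<in> argmax_perm F"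
    unfolding argmax_perm_def using P(2) order_trans by blast
  then show "Q = P" using assms by blast
qed

lemma argmax_perm_conj:
  assumes P: "argmax_perm (\<lambda>Q. tr (transpose Q ** T)) = {P}"
    and A: "A \<in> perm_mats" and B: "B \<in> perm_mats"
  shows "argmax_perm (\<lambda>Q. tr (transpose Q ** (A ** T ** transpose B))) = {A ** P ** transpose B}"
    (is "argmax_perm ?G = _")
proof -
  define F where "F Q = tr (transpose Q ** T)" for Q
  define U where "U Q = transpose A ** Q ** B" for Q
  have G: "?G Q = F (U Q)" for Q
    unfolding F_def U_def by (rule tr_transpose_mult_conj)
  have U_perm: "Q \<in> perm_mats \<Longrightarrow> U Q \<in> perm_mats" for Q
    unfolding U_def using A B by (simp add: perm_mats_mult perm_mats_transpose)
  have U_inv: "U (A ** Q ** transpose B) = Q" and inv_U: "A ** U Q ** transpose B = Q" for Q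
    unfolding U_def using A B
    by (simp_all add: matrix_mul_assoc perm_mats_transpose_mult perm_mats_mult_transpose
        perm_mats_mult_transpose_cancel)
  have P_perm: "P \<in> perm_mats" and P_max: "\<And>Q. Q \<in> perm_mats \<Longrightarrow> F Q \<le> F P"
    and P_uniq: "\<And>Q. Q \<in> perm_mats \<Longrightarrow> F P \<le> F Q \<Longrightarrow> Q = P"
    using argmax_perm_singletonD[OF P[folded F_def]] by blast+
  have AP_perm: "A ** P ** transpose B \<in> perm_mats"
    using A B P_perm by (simp add: perm_mats_mult perm_mats_transpose)
  have "Q \<in> argmax_perm ?G \<longleftrightarrow> Q = A ** P ** transpose B" for Q
  proof
    assume Q: "Q \<in> argmax_perm ?G"
    then have "F (U (A ** P ** transpose B)) \<le> F (U Q)"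
      using AP_perm unfolding argmax_perm_def G by blast
    then have "F P \<le> F (U Q)"
      by (simp only: U_inv)
    then have "U Q = P"
      using Q U_perm P_uniq unfolding argmax_perm_def by blast
    then show "Q = A ** P ** transpose B"
      using inv_U by metis
  next
    assume "Q = A ** P ** transpose B"
    then show "Q \<in> argmax_perm ?G"
      using AP_perm U_perm P_max unfolding argmax_perm_def G by (simp add: U_inv)
  qed
  then show ?thesis by blast
qed

lemma tr_transpose_mult_sum:
  "tr (transpose X ** (\<Sum>j\<in>K. A j ** T j)) = (\<Sum>j\<in>K. tr (transpose (transpose (A j) ** X) ** T j))"
  by (simp add: tr_mult_sum matrix_transpose_mul matrix_mul_assoc)

definition class_map :: "('a \<Rightarrow> 'a set) \<Rightarrow> bool" where
  "class_map S \<longleftrightarrow> (\<forall>k. k \<in> S k) \<and> (\<forall>k l. l \<in> S k \<longrightarrow> S l = S k)"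

definition merge_classes :: "('a \<Rightarrow> 'a set) \<Rightarrow> 'a \<Rightarrow> 'a \<Rightarrow> 'a \<Rightarrow> 'a set" where
  "merge_classes S i j = (\<lambda>k. if k \<in> S i \<union> S j then S i \<union> S j else S k)"

lemma class_map_sym: "class_map S \<Longrightarrow> l \<in> S k \<Longrightarrow> k \<in> S l"
  unfolding class_map_def by metis

lemma class_map_disjoint: "class_map S \<Longrightarrow> k \<notin> S i \<Longrightarrow> S k \<inter> S i = {}"
  unfolding class_map_def by blast

lemma class_map_merge_classes: "class_map S \<Longrightarrow> class_map (merge_classes S i j)"
  unfolding class_map_def merge_classes_def by (smt (verit) UnCI UnE)

lemma subset_merge_classes: "class_map S \<Longrightarrow> S k \<subseteq> merge_classes S i j k"
  unfolding class_map_def merge_classes_def by auto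

lemma mem_merge_classes: "class_map S \<Longrightarrow> j \<in> merge_classes S i j i"
  unfolding class_map_def merge_classes_def by auto

lemma class_map_rtrancl:
  assumes "class_map S" and "\<forall>(a, b)\<in>R. b \<in> S a" and "(u, v) \<in> R\<^sup>*"
  shows "v \<in> S u"
  using assms(3)
proof (induction rule: rtrancl_induct)
  case base
  then show ?case using assms(1) unfolding class_map_def by blast
next
  case (step y z)
  then show ?case using assms(1,2) unfolding class_map_def by blast
qed

lemma edge_order_endpoints:
  assumes "E \<subseteq> complete_edges n" and "edge_order E es" and "(i, j) \<in> set es"
  shows "i \<in> {1..n}" and "j \<in> {1..n}"
proof -
  have "norm_edge (i, j) \<in> complete_edges n"
    using assms unfolding edge_order_def by auto
  then show "i \<in> {1..n}" and "j \<in> {1..n}"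
    unfolding norm_edge_def complete_edges_def by (auto split: if_splits)
qed

lemma sym_edges_edge_order: "edge_order E es \<Longrightarrow> sym_edges E \<subseteq> set es \<union> (set es)\<inverse>"
  unfolding edge_order_def sym_edges_def norm_edge_def by (auto split: if_splits)

lemma spanning_tree_covered:
  assumes tree: "spanning_tree n E" and ord: "edge_order E es" and S: "class_map S"
    and cov: "\<forall>(i, j)\<in>set es. j \<in> S i" and "u \<in> {1..n}" and "v \<in> {1..n}"
  shows "v \<in> S u"
proof (rule class_map_rtrancl[OF S])
  show "\<forall>(a, b)\<in>sym_edges E. b \<in> S a"
    using sym_edges_edge_order[OF ord] cov class_map_sym[OF S] by blast
  show "(u, v) \<in> (sym_edges E)\<^sup>*"
    using tree assms(5,6) unfolding spanning_tree_def by blast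
qed

locale consistent_maximizers =
  fixes n :: nat and T :: "nat \<Rightarrow> nat \<Rightarrow> 'm::finite mat" and P :: "nat \<Rightarrow> nat \<Rightarrow> 'm mat"
  assumes unique_max: "\<forall>i\<in>{1..n}. \<forall>j\<in>{1..n}.
                 argmax_perm (\<lambda>Q. tr (transpose Q ** T i j)) = {P i j}"
    and consist: "\<forall>i\<in>{1..n}. \<forall>j\<in>{1..n}. \<forall>k\<in>{1..n}. P i j ** P j k = P i k"
begin

lemma P_perm: "i \<in> {1..n} \<Longrightarrow> j \<in> {1..n} \<Longrightarrow> P i j \<in> perm_mats"
  using unique_max argmax_perm_singletonD(1) by blast

lemma P_max: "i \<in> {1..n} \<Longrightarrow> j \<in> {1..n} \<Longrightarrow> Q \<in> perm_mats \<Longrightarrow>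
    tr (transpose Q ** T i j) \<le> tr (transpose (P i j) ** T i j)"
  using unique_max argmax_perm_singletonD(2) by blast

lemma P_unique: "i \<in> {1..n} \<Longrightarrow> j \<in> {1..n} \<Longrightarrow> Q \<in> perm_mats \<Longrightarrow>
    tr (transpose (P i j) ** T i j) \<le> tr (transpose Q ** T i j) \<Longrightarrow> Q = P i j"
  using unique_max argmax_perm_singletonD(3) by blast

lemma P_diag:
  assumes i: "i \<in> {1..n}"
  shows "P i i = mat 1"
proof -
  have "P i i = transpose (P i i) ** (P i i ** P i i)"
    using P_perm[OF i i] by (simp add: matrix_mul_assoc perm_mats_transpose_mult)
  also have "\<dots> = transpose (P i i) ** P i i"
    using consist i by simp
  finally show ?thesis
    using P_perm[OF i i] by (simp add: perm_mats_transpose_mult)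
qed

definition synchronized_on :: "(nat \<Rightarrow> 'm mat) \<Rightarrow> nat set \<Rightarrow> bool" where
  "synchronized_on A C \<longleftrightarrow> (\<forall>k\<in>C. \<forall>l\<in>C. A l = A k ** P k l)"

definition synchronized :: "(nat \<Rightarrow> 'm mat) \<Rightarrow> bool" where
  "synchronized A \<longleftrightarrow> (\<forall>k\<in>{1..n}. A k \<in> perm_mats) \<and> synchronized_on A {1..n}"

lemma synchronized_on_cong:
  "\<forall>k\<in>C. A' k = A k \<Longrightarrow> synchronized_on A' C \<longleftrightarrow> synchronized_on A C"
  unfolding synchronized_on_def by simp

lemma synchronized_onI_base:
  assumes "i \<in> {1..n}" and "C \<subseteq> {1..n}" and "\<forall>k\<in>C. A k = X ** P i k"
  shows "synchronized_on A C"
  unfolding synchronized_on_def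
proof (intro ballI)
  fix k l assume k: "k \<in> C" and l: "l \<in> C"
  have "P i k ** P k l = P i l"
    using consist assms(1,2) k l by blast
  then have "A l = X ** (P i k ** P k l)"
    using assms(3) l by simp
  also have "\<dots> = A k ** P k l"
    using assms(3) k by (simp add: matrix_mul_assoc)
  finally show "A l = A k ** P k l" .
qed

lemma synchronized_transpose_mult:
  "synchronized A \<Longrightarrow> k \<in> {1..n} \<Longrightarrow> l \<in> {1..n} \<Longrightarrow> transpose (A k) ** A l = P k l"
  unfolding synchronized_def synchronized_on_def
  by (metis perm_mats_transpose_mult_eq_iff)

theorem synchronized_optimal:
  assumes A: "synchronized A" and B: "\<forall>i\<in>{1..n}. B i \<in> perm_mats"
  shows "Lobj n T B \<le> Lobj n T A"
  unfolding Lobj_def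
proof (intro sum_mono)
  fix i j assume i: "i \<in> {1..n}" and j: "j \<in> {1..n}"
  have "tr (B i ** T i j ** transpose (B j)) = tr (transpose (transpose (B i) ** B j) ** T i j)"
    by (rule tr_conj)
  also have "\<dots> \<le> tr (transpose (P i j) ** T i j)"
    using B i j by (intro P_max) (auto simp: perm_mats_mult perm_mats_transpose)
  also have "\<dots> = tr (A i ** T i j ** transpose (A j))"
    using synchronized_transpose_mult[OF A i j] by (simp add: tr_conj)
  finally show "tr (B i ** T i j ** transpose (B j)) \<le> tr (A i ** T i j ** transpose (A j))" .
qed

definition merge_invariant :: "(nat \<Rightarrow> 'm mat) \<Rightarrow> (nat \<Rightarrow> nat set) \<Rightarrow> bool" where
  "merge_invariant A S \<longleftrightarrow> class_map S \<and>
     (\<forall>k\<in>{1..n}. A k \<in> perm_mats \<and> S k \<subseteq> {1..n} \<and> synchronized_on A (S k))"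

lemma merge_invariant_init:
  "\<forall>k\<in>{1..n}. A k \<in> perm_mats \<Longrightarrow> merge_invariant A (\<lambda>k. {k})"
  unfolding merge_invariant_def class_map_def synchronized_on_def by (simp add: P_diag)

lemma merge_step_eq:
  assumes inv: "merge_invariant A S" and i: "i \<in> {1..n}" and j: "j \<in> {1..n}"
    and step: "merge_step T (i, j) (A, S) (A', S')"
  shows "A' = (\<lambda>k. if k \<in> S j then A i ** P i j ** transpose (A j) ** A k else A k)"
    and "S' = merge_classes S i j"
proof -
  have "A i \<in> perm_mats" and "A j \<in> perm_mats"
    using inv i j unfolding merge_invariant_def by blast+
  then have "argmax_perm (\<lambda>Q. tr (transpose Q ** (A i ** T i j ** transpose (A j))))
      = {A i ** P i j ** transpose (A j)}"
    using unique_max i j by (intro argmax_perm_conj) auto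
  then show "A' = (\<lambda>k. if k \<in> S j then A i ** P i j ** transpose (A j) ** A k else A k)"
    and "S' = merge_classes S i j"
    using step unfolding merge_step_def merge_classes_def by auto
qed

lemma merged_class_base:
  assumes inv: "merge_invariant A S" and i: "i \<in> {1..n}" and j: "j \<in> {1..n}"
    and k: "k \<in> S i \<union> S j"
  shows "(if k \<in> S j then A i ** P i j ** transpose (A j) ** A k else A k) = A i ** P i k"
proof (cases "k \<in> S j")
  case True
  have Aj: "A j \<in> perm_mats" and kn: "k \<in> {1..n}" and Ak: "A k = A j ** P j k"
    using inv i j True unfolding merge_invariant_def class_map_def synchronized_on_def by blast+
  have "A i ** P i j ** transpose (A j) ** A k = A i ** P i j ** (transpose (A j) ** A j) ** P j k"
    by (simp only: Ak matrix_mul_assoc)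
  also have "\<dots> = A i ** (P i j ** P j k)"
    by (simp only: perm_mats_transpose_mult[OF Aj] matrix_mul_rid matrix_mul_assoc)
  also have "\<dots> = A i ** P i k"
    using consist i j kn by simp
  finally show ?thesis
    using True by simp
next
  case False
  then have "k \<in> S i" using k by blast
  moreover have "i \<in> S i" and "synchronized_on A (S i)"
    using inv i unfolding merge_invariant_def class_map_def by blast+
  ultimately have "A k = A i ** P i k"
    unfolding synchronized_on_def by blast
  then show ?thesis
    using False by simp
qed

lemma merge_step_invariant:
  assumes inv: "merge_invariant A S" and i: "i \<in> {1..n}" and j: "j \<in> {1..n}"
    and step: "merge_step T (i, j) (A, S) (A', S')"
  shows "merge_invariant A' S'"
proof -
  note A' = merge_step_eq(1)[OF assms] and S' = merge_step_eq(2)[OF assms]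
  have S: "class_map S" and A_perm: "\<And>k. k \<in> {1..n} \<Longrightarrow> A k \<in> perm_mats"
    and S_sub: "\<And>k. k \<in> {1..n} \<Longrightarrow> S k \<subseteq> {1..n}"
    and A_sync: "\<And>k. k \<in> {1..n} \<Longrightarrow> synchronized_on A (S k)"
    using inv unfolding merge_invariant_def by blast+
  have "A' k \<in> perm_mats" if "k \<in> {1..n}" for k
    using that i j A_perm P_perm[OF i j] unfolding A' by (simp add: perm_mats_mult perm_mats_transpose)
  moreover have "S' k \<subseteq> {1..n} \<and> synchronized_on A' (S' k)" if k: "k \<in> {1..n}" for k
  proof (cases "k \<in> S i \<union> S j")
    case True
    have "synchronized_on A' (S i \<union> S j)"
      using i S_sub[OF i] S_sub[OF j] merged_class_base[OF inv i j] unfolding A'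
      by (intro synchronized_onI_base[of i]) auto
    then show ?thesis
      using True S_sub[OF i] S_sub[OF j] unfolding S' merge_classes_def by simp
  next
    case False
    then have "S k \<inter> S j = {}"
      using class_map_disjoint[OF S] by blast
    then have "synchronized_on A' (S k) \<longleftrightarrow> synchronized_on A (S k)"
      unfolding A' by (intro synchronized_on_cong) auto
    then show ?thesis
      using False S_sub[OF k] A_sync[OF k] unfolding S' merge_classes_def by simp
  qed
  ultimately show ?thesis
    unfolding merge_invariant_def S' using class_map_merge_classes[OF S] by blast
qed

lemma merge_run_invariant:
  assumes "merge_run T es st st'" and "merge_invariant (fst st) (snd st)"
    and "\<forall>(i, j)\<in>set es. i \<in> {1..n} \<and> j \<in> {1..n}"
  shows "merge_invariant (fst st') (snd st') \<and> (\<forall>k. snd st k \<subseteq> snd st' k)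
    \<and> (\<forall>(i, j)\<in>set es. j \<in> snd st' i)"
  using assms
proof (induction rule: merge_run.induct)
  case (nil st)
  then show ?case by simp
next
  case (cons e st st' es st'')
  obtain i j where e: "e = (i, j)" by (cases e)
  obtain A S where st: "st = (A, S)" by (cases st)
  obtain A' S' where st': "st' = (A', S')" by (cases st')
  have ij: "i \<in> {1..n}" "j \<in> {1..n}" using cons.prems(2) e by auto
  have inv': "merge_invariant A' S'"
    using merge_step_invariant[OF _ ij] cons.hyps(1) cons.prems(1) e st st' by simp
  have S'_eq: "S' = merge_classes S i j"
    using merge_step_eq(2)[OF _ ij] cons.hyps(1) cons.prems(1) e st st' by simp
  have S: "class_map S"
    using cons.prems(1) st unfolding merge_invariant_def by simp
  have IH: "merge_invariant (fst st'') (snd st'') \<and> (\<forall>k. S' k \<subseteq> snd st'' k)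
      \<and> (\<forall>(i, j)\<in>set es. j \<in> snd st'' i)"
    using cons.IH inv' st' cons.prems(2) by simp
  moreover have "\<forall>k. S k \<subseteq> snd st'' k"
    using IH subset_merge_classes[OF S] S'_eq by blast
  moreover have "j \<in> snd st'' i"
    using IH mem_merge_classes[OF S] S'_eq by blast
  ultimately show ?case using st e by simp
qed

lemma merge_invariant_synchronized:
  assumes inv: "merge_invariant A S" and conn: "\<forall>u\<in>{1..n}. \<forall>v\<in>{1..n}. v \<in> S u"
  shows "synchronized A"
  unfolding synchronized_def synchronized_on_def
proof (intro conjI ballI)
  fix k assume "k \<in> {1..n}"
  then show "A k \<in> perm_mats" using inv unfolding merge_invariant_def by blast
next
  fix k l assume k: "k \<in> {1..n}" and l: "l \<in> {1..n}"
  have "k \<in> S k" and "l \<in> S k" and "synchronized_on A (S k)"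
    using inv conn k l unfolding merge_invariant_def class_map_def by blast+
  then show "A l = A k ** P k l" unfolding synchronized_on_def by blast
qed

lemma coord_step_synchronized_fixed:
  assumes n2: "2 \<le> n" and A: "synchronized A" and step: "coord_step n T A A'"
  shows "A' = A"
proof -
  obtain i B where i: "i \<in> {1..n}" and A': "A' = A(i := B)"
    and B: "B \<in> argmax_perm (\<lambda>X. tr (transpose X ** (\<Sum>j\<in>{1..n} - {i}. A j ** T j i)))"
    using step unfolding coord_step_def by blast
  let ?K = "{1..n} - {i}"
  define g where "g X j = tr (transpose (transpose (A j) ** X) ** T j i)" for X j
  have A_perm: "\<And>k. k \<in> {1..n} \<Longrightarrow> A k \<in> perm_mats"
    using A unfolding synchronized_def by blast
  have B_perm: "B \<in> perm_mats" using B unfolding argmax_perm_def by blast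
  define j :: nat where "j = (if i = 1 then 2 else 1)"
  have j: "j \<in> ?K"
    using n2 i unfolding j_def by auto
  have B_le: "g B l \<le> g (A i) l" if l: "l \<in> ?K" for l
    using l i A_perm B_perm synchronized_transpose_mult[OF A, of l i]
    unfolding g_def by (auto intro!: P_max simp: perm_mats_mult perm_mats_transpose)
  have "sum (g (A i)) ?K \<le> sum (g B) ?K"
    using B A_perm[OF i] unfolding argmax_perm_def g_def tr_transpose_mult_sum by blast
  then have "g (A i) j \<le> g B j"
    using B_le j sum_strict_mono_ex1[of ?K "g B" "g (A i)"] by force
  then have "transpose (A j) ** B = P j i"
    using j i A_perm B_perm synchronized_transpose_mult[OF A, of j i]
    unfolding g_def by (auto intro!: P_unique simp: perm_mats_mult perm_mats_transpose)
  then have "B = A j ** P j i"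
    using A_perm j by (simp add: perm_mats_transpose_mult_eq_iff)
  also have "\<dots> = A i"
    using A i j unfolding synchronized_def synchronized_on_def by (metis DiffD1)
  finally show ?thesis using A' by simp
qed

end

theorem theorem1:
  fixes n :: nat
    and T :: "nat \<Rightarrow> nat \<Rightarrow> 'm::finite mat"
    and P :: "nat \<Rightarrow> nat \<Rightarrow> 'm mat"
  assumes n2: "n \<ge> 2"
    and Tsym: "\<forall>i\<in>{1..n}. \<forall>j\<in>{1..n}. T i j = transpose (T j i)"
    and uniq: "\<forall>i\<in>{1..n}. \<forall>j\<in>{1..n}.
                 argmax_perm (\<lambda>Q. tr (transpose Q ** T i j)) = {P i j}"
    and consist: "\<forall>i\<in>{1..n}. \<forall>j\<in>{1..n}. \<forall>k\<in>{1..n}. P i j ** P j k = P i k"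
    and mst: "max_spanning_tree n T E"
    and ord: "edge_order E es"
    and init: "\<forall>i\<in>{1..n}. A0 i \<in> perm_mats"
    and stage3: "merge_run T es (A0, \<lambda>i. {i}) (A1, S1)"
    and stage4: "(coord_step n T)\<^sup>*\<^sup>* A1 A"
  shows "(\<forall>i\<in>{1..n}. A i \<in> perm_mats) \<and>
         (\<forall>B. (\<forall>i\<in>{1..n}. B i \<in> perm_mats) \<longrightarrow> Lobj n T B \<le> Lobj n T A)"
proof -
  interpret consistent_maximizers n T P
    using uniq consist by unfold_locales
  have tree: "spanning_tree n E"
    using mst unfolding max_spanning_tree_def by blast
  have ends: "\<forall>(i, j)\<in>set es. i \<in> {1..n} \<and> j \<in> {1..n}"
    using tree edge_order_endpoints[OF _ ord] unfolding spanning_tree_def by blast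
  have inv: "merge_invariant A1 S1" and covered: "\<forall>(i, j)\<in>set es. j \<in> S1 i"
    using merge_run_invariant[OF stage3 _ ends] merge_invariant_init[OF init] by auto
  have "class_map S1"
    using inv unfolding merge_invariant_def by blast
  then have "synchronized A1"
    using merge_invariant_synchronized[OF inv] spanning_tree_covered[OF tree ord _ covered] by blast
  moreover have "A = A1"
    using stage4 by (induction rule: rtranclp_induct)
      (use \<open>synchronized A1\<close> coord_step_synchronized_fixed[OF n2] in auto)
  ultimately show ?thesis
    using synchronized_optimal unfolding synchronized_def by blast
qed

end
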